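(* Let $n\ge 2$. For every triangulation $T$ of the cyclic polytope $C(n+2,3)$, the graph $\Gamma(T) := ([n], F_1(T)\cap \binom{[n]}{2})$ is a persistent graph on $n$ vertices.
   Context: The cyclic polytope $C(n+2,3)$ is the convex hull of $n+2$ points on the moment curve $t\mapsto(t,t^2,t^3)$, with vertices labelled $0,1,\dots,n+1$ in increasing order of the parameter; faces are identified with their vertex sets. A triangulation of $C(n+2,3)$ is a set $T$ of 3-simplices (4-element subsets of $\{0,\dots,n+1\}$) such that the union of their convex hulls is the polytope and any two of them intersect in a common (possibly empty) face. $F_1(T)$ is the set of 2-element subsets contained in some simplex of $T$; thus $i,j\in[n]$ are adjacent in $\Gamma(T)$ iff $\{i,j\}\subseteq S$ for some $S\in T$. A graph $G=([n],E)$ is persistent if (1) $\{i,i+1\}\in E$ for all $1\le i<n$; (2) (X-property) if $\{a,c\},\{b,d\}\in E$ for $a<b<c<d$ then $\{a,d\}\in E$; (3) (bar-property) for every edge $\{a,b\}\in E$ with $a<b-1$ there is $x$ with $a<x<b$ and $\{a,x\},\{x,b\}\in E$. *)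

theory Defs
  imports "HOL-Analysis.Analysis"
begin

definition moment_pt :: "(nat \<Rightarrow> real) \<Rightarrow> nat \<Rightarrow> real \<times> real \<times> real" where
  "moment_pt t i = (t i, (t i)^2, (t i)^3)"

definition conv_of :: "(nat \<Rightarrow> real) \<Rightarrow> nat set \<Rightarrow> (real \<times> real \<times> real) set" where
  "conv_of t S = convex hull (moment_pt t ` S)"

text \<open>Triangulation of the cyclic polytope C(n+2,3) with vertices 0..n+1
  placed at the strictly increasing parameters t 0 < ... < t (n+1).\<close>
definition cyclic_triangulation :: "nat \<Rightarrow> (nat \<Rightarrow> real) \<Rightarrow> nat set set \<Rightarrow> bool" where
  "cyclic_triangulation n t T \<longleftrightarrow>
     (\<forall>S\<in>T. S \<subseteq> {0..n+1} \<and> card S = 4) \<and>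
     \<Union> (conv_of t ` T) = conv_of t {0..n+1} \<and>
     (\<forall>S\<in>T. \<forall>S'\<in>T. \<exists>F. F \<subseteq> S \<and> F \<subseteq> S' \<and> conv_of t S \<inter> conv_of t S' = conv_of t F)"

definition Gamma_graph :: "nat \<Rightarrow> nat set set \<Rightarrow> nat set set" where
  "Gamma_graph n T = {e. e \<subseteq> {1..n} \<and> card e = 2 \<and> (\<exists>S\<in>T. e \<subseteq> S)}"

definition persistent :: "nat \<Rightarrow> nat set set \<Rightarrow> bool" where
  "persistent n E \<longleftrightarrow>
     (\<forall>e\<in>E. e \<subseteq> {1..n} \<and> card e = 2) \<and>
     (\<forall>i. 1 \<le> i \<and> i < n \<longrightarrow> {i, i+1} \<in> E) \<and>
     (\<forall>a b c d. a < b \<and> b < c \<and> c < d \<and> {a,c} \<in> E \<and> {b,d} \<in> E \<longrightarrow> {a,d} \<in> E) \<and>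
     (\<forall>a b. a + 1 < b \<and> {a,b} \<in> E \<longrightarrow> (\<exists>x. a < x \<and> x < b \<and> {a,x} \<in> E \<and> {x,b} \<in> E))"

end

(*
  Write \<gamma>(x) = (x, x^2, x^3). Affine functionals on R^3 restrict to cubic polynomials on \<gamma>,
  so a convex combination of points \<gamma>(x), x \<in> X, lying on the open chord \<gamma>(a)\<gamma>(d) has the
  same moments up to order 3 as a two-point measure on {a, d}. Testing this against (x - a)(x - d),
  (x - a)(x - d)^2 and (x - a)^2(d - x) shows that either a, d \<in> X or X contains points
  x < a < y < d < u. Conversely, for p < x < q < y < r the Radon partition of five points on \<gamma>
  makes the chord \<gamma>(x)\<gamma>(y) meet the triangle \<gamma>(p)\<gamma>(q)\<gamma>(r).

  In a triangulation two simplices meet in a common face, and a simplex has only four vertices;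
  together these facts forbid an edge xy and a triangle pqr of T with p < x < q < y < r. A simplex
  covering the midpoint of a chord ad therefore contains ad unless it crosses it, which gives the
  path edges and the X-property. For the bar property, a simplex covering a point near the midpoint
  of an edge ab, pushed slightly towards \<gamma>(a+1), contains ab together with a vertex strictly
  between a and b.
*)

theory Submission
  imports Defs
begin

definition moment_curve :: "real \<Rightarrow> real \<times> real \<times> real" where
  "moment_curve x = (x, x^2, x^3)"

lemma inj_moment_curve: "inj moment_curve"
  by (rule injI) (simp add: moment_curve_def)

lemma moment_pt_eq_moment_curve: "moment_pt t i = moment_curve (t i)"
  by (simp add: moment_pt_def moment_curve_def)

lemma conv_of_eq_convex_hull_moment_curve:
  "conv_of t F = convex hull (moment_curve ` t ` F)"
  by (simp add: conv_of_def moment_pt_def moment_curve_def image_image)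

lemma convex_hull_moment_curve_weights:
  assumes "finite X" "z \<in> convex hull (moment_curve ` X)"
  obtains w where "\<forall>x\<in>X. 0 \<le> w x" "sum w X = 1" "(\<Sum>x\<in>X. w x *\<^sub>R moment_curve x) = z"
proof -
  have inj: "inj_on moment_curve X"
    using inj_moment_curve by (rule inj_on_subset) simp
  obtain u where "\<forall>p\<in>moment_curve ` X. 0 \<le> u p" "sum u (moment_curve ` X) = 1"
      "(\<Sum>p\<in>moment_curve ` X. u p *\<^sub>R p) = z"
    using assms by (auto simp: convex_hull_finite)
  then show ?thesis
    using that[of "u \<circ> moment_curve"] by (simp add: sum.reindex[OF inj])
qed

lemma moment_curve_weighted_cubic:
  assumes "sum w X = 1" "(\<Sum>x\<in>X. w x *\<^sub>R moment_curve x) = z"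
  shows "(\<Sum>x\<in>X. w x * (c0 + c1 * x + c2 * x^2 + c3 * x^3))
           = c0 + c1 * fst z + c2 * fst (snd z) + c3 * snd (snd z)"
proof -
  have "(\<Sum>x\<in>X. w x * (c0 + c1 * x + c2 * x^2 + c3 * x^3))
      = c0 * sum w X + c1 * (\<Sum>x\<in>X. w x * x) + c2 * (\<Sum>x\<in>X. w x * x^2) + c3 * (\<Sum>x\<in>X. w x * x^3)"
    by (simp add: sum.distrib sum_distrib_left algebra_simps)
  then show ?thesis
    using assms by (auto simp: fst_sum snd_sum moment_curve_def)
qed

definition same_cubic_moments :: "(real \<Rightarrow> real) \<Rightarrow> real set \<Rightarrow> real \<Rightarrow> real \<Rightarrow> real \<Rightarrow> bool" where
  "same_cubic_moments w X s a d \<longleftrightarrow> (\<forall>c0 c1 c2 c3.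
     (\<Sum>x\<in>X. w x * (c0 + c1 * x + c2 * x^2 + c3 * x^3))
       = (1 - s) * (c0 + c1 * a + c2 * a^2 + c3 * a^3) + s * (c0 + c1 * d + c2 * d^2 + c3 * d^3))"

lemma same_cubic_momentsD:
  assumes "same_cubic_moments w X s a d" "\<And>x. p x = c0 + c1 * x + c2 * x^2 + c3 * x^3"
  shows "(\<Sum>x\<in>X. w x * p x) = (1 - s) * p a + s * p d"
  using assms unfolding same_cubic_moments_def by presburger

lemma same_cubic_moments_interior_mass:
  assumes X: "finite X" and w: "\<forall>x\<in>X. 0 \<le> w x" and moments: "same_cubic_moments w X s a d"
    and y: "y \<in> X" "0 < w y" "a < y" "y < d"
  shows "\<exists>x\<in>X. x < a" "\<exists>u\<in>X. d < u"
proof -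
  show "\<exists>x\<in>X. x < a"
  proof (rule ccontr)
    assume "\<not> (\<exists>x\<in>X. x < a)"
    then have "0 < (\<Sum>x\<in>X. w x * ((x - a) * (x - d)^2))"
      using y w by (intro sum_pos2[OF X y(1)]) (auto simp: not_less)
    moreover have "(\<Sum>x\<in>X. w x * ((x - a) * (x - d)^2)) = 0"
      by (subst same_cubic_momentsD[OF moments, of _ "- a * d^2" "d^2 + 2 * a * d" "- a - 2 * d" 1])
        (simp_all add: algebra_simps power2_eq_square power3_eq_cube)
    ultimately show False by simp
  qed
  show "\<exists>u\<in>X. d < u"
  proof (rule ccontr)
    assume "\<not> (\<exists>u\<in>X. d < u)"
    then have "0 < (\<Sum>x\<in>X. w x * ((x - a)^2 * (d - x)))"
      using y w by (intro sum_pos2[OF X y(1)]) (auto simp: not_less)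
    moreover have "(\<Sum>x\<in>X. w x * ((x - a)^2 * (d - x))) = 0"
      by (subst same_cubic_momentsD[OF moments, of _ "a^2 * d" "-(a^2) - 2 * a * d" "2 * a + d" "-1"])
        (simp_all add: algebra_simps power2_eq_square power3_eq_cube)
    ultimately show False by simp
  qed
qed

lemma same_cubic_moments_endpoints:
  assumes X: "finite X" and w: "\<forall>x\<in>X. 0 \<le> w x" and moments: "same_cubic_moments w X s a d"
    and "a < d" "0 < s" "s < 1" and no_interior: "\<forall>y\<in>X. 0 < w y \<longrightarrow> y \<le> a \<or> d \<le> y"
  shows "a \<in> X" "d \<in> X"
proof -
  have "(\<Sum>x\<in>X. w x * ((x - a) * (x - d))) = 0"
    by (subst same_cubic_momentsD[OF moments, of _ "a * d" "- a - d" 1 0])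
      (simp_all add: algebra_simps power2_eq_square)
  moreover have "0 \<le> w x * ((x - a) * (x - d))" if "x \<in> X" for x
  proof (cases "w x = 0")
    case False
    with no_interior w that have "x \<le> a \<or> d \<le> x" by force
    then have "0 \<le> (x - a) * (x - d)"
      using \<open>a < d\<close> by (auto simp: zero_le_mult_iff)
    then show ?thesis
      using w that by simp
  qed simp
  ultimately have support: "x = a \<or> x = d" if "x \<in> X" "0 < w x" for x
    using that by (fastforce simp: sum_nonneg_eq_0_iff[OF X])
  show "a \<in> X"
  proof (rule ccontr)
    assume "a \<notin> X"
    then have "(\<Sum>x\<in>X. w x * (x - d)^2) = 0"
      using support w by (intro sum.neutral) (metis less_eq_real_def mult_eq_0_iff power_zero_numeral right_minus_eq)
    moreover have "(\<Sum>x\<in>X. w x * (x - d)^2) = (1 - s) * (a - d)^2"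
      by (subst same_cubic_momentsD[OF moments, of _ "d^2" "-2 * d" 1 0])
        (simp_all add: algebra_simps power2_eq_square)
    ultimately show False using \<open>s < 1\<close> \<open>a < d\<close> by simp
  qed
  show "d \<in> X"
  proof (rule ccontr)
    assume "d \<notin> X"
    then have "(\<Sum>x\<in>X. w x * (x - a)^2) = 0"
      using support w by (intro sum.neutral) (metis less_eq_real_def mult_eq_0_iff power_zero_numeral right_minus_eq)
    moreover have "(\<Sum>x\<in>X. w x * (x - a)^2) = s * (d - a)^2"
      by (subst same_cubic_momentsD[OF moments, of _ "a^2" "-2 * a" 1 0])
        (simp_all add: algebra_simps power2_eq_square)
    ultimately show False using \<open>0 < s\<close> \<open>a < d\<close> by simp
  qed
qed

lemma moment_curve_chord_in_convex_hull:
  fixes X :: "real set"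
  assumes X: "finite X" and "a < d"
    and z: "z \<in> open_segment (moment_curve a) (moment_curve d)" "z \<in> convex hull (moment_curve ` X)"
  shows "{a, d} \<subseteq> X \<or> (\<exists>x\<in>X. \<exists>y\<in>X. \<exists>u\<in>X. x < a \<and> a < y \<and> y < d \<and> d < u)"
proof -
  obtain s where s: "0 < s" "s < 1" and z_eq: "z = (1 - s) *\<^sub>R moment_curve a + s *\<^sub>R moment_curve d"
    using z(1) by (auto simp: in_segment)
  obtain w where w: "\<forall>x\<in>X. 0 \<le> w x" "sum w X = 1" "(\<Sum>x\<in>X. w x *\<^sub>R moment_curve x) = z"
    using convex_hull_moment_curve_weights[OF X z(2)] by blast
  have moments: "same_cubic_moments w X s a d"
    unfolding same_cubic_moments_def moment_curve_weighted_cubic[OF w(2,3)]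
    by (simp add: z_eq moment_curve_def algebra_simps)
  show ?thesis
  proof (cases "\<exists>y\<in>X. 0 < w y \<and> a < y \<and> y < d")
    case True
    then show ?thesis
      using same_cubic_moments_interior_mass[OF X w(1) moments] by blast
  next
    case False
    then show ?thesis
      using same_cubic_moments_endpoints[OF X w(1) moments \<open>a < d\<close> s] by force
  qed
qed

lemma moment_curve_convex_hull_between:
  fixes X :: "real set"
  assumes X: "finite X" and z: "z \<in> convex hull (moment_curve ` X)"
    and neg: "fst (snd z) - (a + b) * fst z + a * b < 0"
  shows "\<exists>x\<in>X. (x - a) * (x - b) < 0"
proof -
  obtain w where w: "\<forall>x\<in>X. 0 \<le> w x" "sum w X = 1" "(\<Sum>x\<in>X. w x *\<^sub>R moment_curve x) = z"
    using convex_hull_moment_curve_weights[OF X z] by blast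
  have "(\<Sum>x\<in>X. w x * ((x - a) * (x - b))) < 0"
    using moment_curve_weighted_cubic[OF w(2,3), of "a * b" "- a - b" 1 0] neg
    by (simp add: algebra_simps power2_eq_square)
  then obtain x where "x \<in> X" "w x * ((x - a) * (x - b)) < 0"
    by (meson not_less sum_nonneg)
  then show ?thesis
    using w(1) by (auto simp: mult_less_0_iff)
qed

definition vandermonde4 :: "real \<Rightarrow> real \<Rightarrow> real \<Rightarrow> real \<Rightarrow> real" where
  "vandermonde4 a b c d = (b - a) * (c - a) * (d - a) * (c - b) * (d - b) * (d - c)"

lemma vandermonde4_pos: "a < b \<Longrightarrow> b < c \<Longrightarrow> c < d \<Longrightarrow> 0 < vandermonde4 a b c d"
  by (simp add: vandermonde4_def)

(* The coefficients are the maximal minors of the 5 x 4 Vandermonde matrix of p, x, q, y, r. *)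
lemma moment_curve_radon_identity:
  "vandermonde4 x q y r *\<^sub>R moment_curve p + vandermonde4 p x y r *\<^sub>R moment_curve q
     + vandermonde4 p x q y *\<^sub>R moment_curve r
   = vandermonde4 p q y r *\<^sub>R moment_curve x + vandermonde4 p x q r *\<^sub>R moment_curve y"
  "vandermonde4 x q y r + vandermonde4 p x y r + vandermonde4 p x q y
   = vandermonde4 p q y r + vandermonde4 p x q r"
  unfolding vandermonde4_def moment_curve_def by (simp_all, algebra+)

lemma moment_curve_radon:
  assumes "p < x" "x < q" "q < y" "y < r"
  shows "open_segment (moment_curve x) (moment_curve y)
           \<inter> convex hull {moment_curve p, moment_curve q, moment_curve r} \<noteq> {}"
proof -
  define cp cq cr cx cy where "cp = vandermonde4 x q y r" and "cq = vandermonde4 p x y r"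
    and "cr = vandermonde4 p x q y" and "cx = vandermonde4 p q y r" and "cy = vandermonde4 p x q r"
  have pos: "0 < cp" "0 < cq" "0 < cr" "0 < cx" "0 < cy"
    unfolding cp_def cq_def cr_def cx_def cy_def using assms by (auto intro!: vandermonde4_pos)
  define c where "c = cx + cy"
  have c_pos: "0 < c" and c_eq: "c = cp + cq + cr"
    using pos moment_curve_radon_identity(2)[of x q y r p] unfolding c_def cp_def cq_def cr_def cx_def cy_def
    by auto
  define z where "z = (1 - cy / c) *\<^sub>R moment_curve x + (cy / c) *\<^sub>R moment_curve y"
  have "z = (cx / c) *\<^sub>R moment_curve x + (cy / c) *\<^sub>R moment_curve y"
    using c_pos unfolding z_def c_def by (simp add: field_simps)
  also have "\<dots> = inverse c *\<^sub>R (cx *\<^sub>R moment_curve x + cy *\<^sub>R moment_curve y)"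
    by (simp add: divide_inverse_commute scaleR_add_right)
  also have "\<dots> = inverse c *\<^sub>R (cp *\<^sub>R moment_curve p + cq *\<^sub>R moment_curve q + cr *\<^sub>R moment_curve r)"
    unfolding cp_def cq_def cr_def cx_def cy_def moment_curve_radon_identity(1) ..
  also have "\<dots> = (cp / c) *\<^sub>R moment_curve p + (cq / c) *\<^sub>R moment_curve q + (cr / c) *\<^sub>R moment_curve r"
    by (simp add: divide_inverse_commute scaleR_add_right)
  finally have "z \<in> convex hull {moment_curve p, moment_curve q, moment_curve r}"
    unfolding convex_hull_3 using pos c_pos c_eq by (auto simp: add_divide_distrib[symmetric] intro!: exI)
  moreover have "z \<in> open_segment (moment_curve x) (moment_curve y)"
    unfolding in_segment z_def using pos c_pos assms inj_moment_curve
    by (intro conjI exI[of _ "cy / c"]) (auto simp: c_def inj_eq)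
  ultimately show ?thesis by blast
qed

lemma finite_closed_cover_segment_start:
  fixes M P :: "'a::real_normed_vector"
  assumes "finite \<C>" "\<forall>C\<in>\<C>. closed C" "closed_segment M P \<subseteq> \<Union>\<C>"
  shows "\<exists>C\<in>\<C>. \<exists>\<delta>>0. M \<in> C \<and> M + \<delta> *\<^sub>R (P - M) \<in> C"
proof -
  define U where "U = \<Union>{C\<in>\<C>. M \<notin> C}"
  have "open (- U)"
    using assms(1,2) unfolding U_def by (intro open_Compl closed_Union) auto
  moreover have "M \<in> - U"
    unfolding U_def by blast
  moreover have "((\<lambda>\<delta>. M + \<delta> *\<^sub>R (P - M)) \<longlongrightarrow> M) (at_right 0)"
    by (auto intro!: tendsto_eq_intros)
  ultimately have "eventually (\<lambda>\<delta>. M + \<delta> *\<^sub>R (P - M) \<in> - U) (at_right 0)"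
    by (metis topological_tendstoD)
  then obtain b :: real where "0 < b" "\<forall>\<delta>>0. \<delta> < b \<longrightarrow> M + \<delta> *\<^sub>R (P - M) \<notin> U"
    by (auto simp: eventually_at_right_field)
  then obtain \<delta> :: real where \<delta>: "0 < \<delta>" "\<delta> < 1" "M + \<delta> *\<^sub>R (P - M) \<notin> U"
    by (metis field_lbound_gt_zero zero_less_one)
  have "M + \<delta> *\<^sub>R (P - M) \<in> closed_segment M P"
    using \<delta> by (auto simp: in_segment algebra_simps intro!: exI[of _ \<delta>])
  then obtain C where "C \<in> \<C>" "M + \<delta> *\<^sub>R (P - M) \<in> C"
    using assms(3) by blast
  with \<delta> show ?thesis
    unfolding U_def by blast
qed

lemma insert_in_Gamma_graph_iff:
  "{u, v} \<in> Gamma_graph n T \<longleftrightarrow> u \<in> {1..n} \<and> v \<in> {1..n} \<and> u \<noteq> v \<and> (\<exists>S\<in>T. {u, v} \<subseteq> S)"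
  unfolding Gamma_graph_def by (cases "u = v") auto

lemma conv_of_mono: "F \<subseteq> S \<Longrightarrow> conv_of t F \<subseteq> conv_of t S"
  unfolding conv_of_def by (intro hull_mono image_mono)

lemma closed_segment_subset_conv_of:
  "x \<in> S \<Longrightarrow> y \<in> S \<Longrightarrow> closed_segment (moment_pt t x) (moment_pt t y) \<subseteq> conv_of t S"
  unfolding conv_of_def by (intro closed_segment_subset_convex_hull) (auto intro: hull_inc)

lemma closed_conv_of: "finite F \<Longrightarrow> closed (conv_of t F)"
  unfolding conv_of_def by (intro compact_imp_closed compact_convex_hull finite_imp_compact) simp

locale cyclic_polytope_triangulation =
  fixes n :: nat and t :: "nat \<Rightarrow> real" and T :: "nat set set"
  assumes mono: "strict_mono_on {0..n+1} t"
    and triangulation: "cyclic_triangulation n t T"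
begin

lemma t_less_iff: "i \<le> n + 1 \<Longrightarrow> j \<le> n + 1 \<Longrightarrow> t i < t j \<longleftrightarrow> i < j"
  using strict_mono_on_less[OF mono] by simp

lemma t_eq_iff: "i \<le> n + 1 \<Longrightarrow> j \<le> n + 1 \<Longrightarrow> t i = t j \<longleftrightarrow> i = j"
  using strict_mono_on_eq[OF mono] by simp

lemma simplex_subset: "S \<in> T \<Longrightarrow> S \<subseteq> {0..n+1}"
  and card_simplex: "S \<in> T \<Longrightarrow> card S = 4"
  and finite_simplex: "S \<in> T \<Longrightarrow> finite S"
  using triangulation unfolding cyclic_triangulation_def by (auto intro: finite_subset)

lemma simplex_vertex_le: "S \<in> T \<Longrightarrow> i \<in> S \<Longrightarrow> i \<le> n + 1"
  using simplex_subset by fastforce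

lemma finite_triangulation: "finite T"
proof -
  have "T \<subseteq> Pow {0..n+1}"
    using simplex_subset by blast
  then show ?thesis
    by (rule finite_subset) simp
qed

lemma Union_conv_of_triangulation: "\<Union> (conv_of t ` T) = conv_of t {0..n+1}"
  using triangulation unfolding cyclic_triangulation_def by blast

lemma conv_of_Int_simplices:
  "S \<in> T \<Longrightarrow> S' \<in> T \<Longrightarrow> \<exists>F. F \<subseteq> S \<and> F \<subseteq> S' \<and> conv_of t S \<inter> conv_of t S' = conv_of t F"
  using triangulation unfolding cyclic_triangulation_def by blast

lemma not_five_increasing_in_simplex:
  assumes "S \<in> T" "{a, b, c, d, e} \<subseteq> S" "a < b" "b < c" "c < d" "d < e"
  shows False
proof -
  have "card {a, b, c, d, e} \<le> card S"
    using assms(1,2) finite_simplex by (intro card_mono)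
  then show False
    using assms card_simplex by simp
qed

lemma chord_in_conv_of:
  assumes "F \<subseteq> {0..n+1}" "a < d" "d \<le> n + 1"
    and "z \<in> open_segment (moment_pt t a) (moment_pt t d)" "z \<in> conv_of t F"
  shows "{a, d} \<subseteq> F \<or> (\<exists>i\<in>F. \<exists>j\<in>F. \<exists>k\<in>F. i < a \<and> a < j \<and> j < d \<and> d < k)"
proof -
  have F: "finite F" "\<And>i. i \<in> F \<Longrightarrow> i \<le> n + 1"
    using assms(1) by (auto intro: finite_subset)
  have "{t a, t d} \<subseteq> t ` F \<or>
      (\<exists>x\<in>t ` F. \<exists>y\<in>t ` F. \<exists>u\<in>t ` F. x < t a \<and> t a < y \<and> y < t d \<and> t d < u)"
    using assms by (intro moment_curve_chord_in_convex_hull)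
      (auto simp: t_less_iff moment_pt_def moment_curve_def conv_of_eq_convex_hull_moment_curve F)
  then show ?thesis
    using assms(2,3) F by (auto simp: t_less_iff t_eq_iff)
qed

lemma no_crossing:
  assumes "S \<in> T" "S' \<in> T" "{x, y} \<subseteq> S" "{p, q, r} \<subseteq> S'"
    and "p < x" "x < q" "q < y" "y < r"
  shows False
proof -
  have vertices: "p \<le> n + 1" "x \<le> n + 1" "q \<le> n + 1" "y \<le> n + 1" "r \<le> n + 1"
    using assms(1-4) simplex_vertex_le by auto
  have "t p < t x" "t x < t q" "t q < t y" "t y < t r"
    using assms(5-8) vertices by (simp_all add: t_less_iff)
  from moment_curve_radon[OF this] obtain z where
    z: "z \<in> open_segment (moment_pt t x) (moment_pt t y)"
      "z \<in> convex hull {moment_pt t p, moment_pt t q, moment_pt t r}"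
    unfolding moment_pt_eq_moment_curve by blast
  have "z \<in> conv_of t S"
    using z(1) assms(3) closed_segment_subset_conv_of[of x S y t] open_closed_segment by blast
  moreover have "z \<in> conv_of t S'"
    using z(2) assms(4) conv_of_mono[of "{p, q, r}" S' t] unfolding conv_of_def by auto
  moreover obtain F where F: "F \<subseteq> S" "F \<subseteq> S'" "conv_of t S \<inter> conv_of t S' = conv_of t F"
    using conv_of_Int_simplices[OF assms(1,2)] by blast
  ultimately have "z \<in> conv_of t F" by blast
  with z(1) F(1) simplex_subset[OF assms(1)] assms(6,7) vertices(4)
  have "{x, y} \<subseteq> F \<or> (\<exists>i\<in>F. \<exists>j\<in>F. \<exists>k\<in>F. i < x \<and> x < j \<and> j < y \<and> y < k)"
    by (intro chord_in_conv_of) auto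
  then show False
  proof
    assume "{x, y} \<subseteq> F"
    with F(2) assms(4) have "{p, x, q, y, r} \<subseteq> S'" by blast
    with assms(5-8) show False
      by (intro not_five_increasing_in_simplex[OF assms(2)])
  next
    assume "\<exists>i\<in>F. \<exists>j\<in>F. \<exists>k\<in>F. i < x \<and> x < j \<and> j < y \<and> y < k"
    then obtain i j k where "{i, j, k} \<subseteq> F" "i < x" "x < j" "j < y" "y < k" by blast
    with F(1) assms(3) have "{i, x, j, y, k} \<subseteq> S" by blast
    then show False
      by (rule not_five_increasing_in_simplex[OF assms(1)]) fact+
  qed
qed

lemma edge_subset_simplex_meeting_it:
  assumes "S0 \<in> T" "{a, d} \<subseteq> S0" "a < d" "S \<in> T"
    and "z \<in> open_segment (moment_pt t a) (moment_pt t d)" "z \<in> conv_of t S"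
  shows "{a, d} \<subseteq> S"
proof -
  have "{a, d} \<subseteq> S \<or> (\<exists>i\<in>S. \<exists>j\<in>S. \<exists>k\<in>S. i < a \<and> a < j \<and> j < d \<and> d < k)"
    using assms simplex_vertex_le[OF assms(1)] by (intro chord_in_conv_of simplex_subset) auto
  moreover have "\<not> ({i, j, k} \<subseteq> S \<and> i < a \<and> a < j \<and> j < d \<and> d < k)" for i j k
    using no_crossing[OF assms(1,4,2)] by blast
  ultimately show ?thesis by blast
qed

lemma edge_or_crossing:
  assumes "a < d" "d \<le> n + 1"
  obtains S where "S \<in> T" "{a, d} \<subseteq> S"
  | S i j k where "S \<in> T" "{i, j, k} \<subseteq> S" "i < a" "a < j" "j < d" "d < k"
proof -
  let ?M = "midpoint (moment_pt t a) (moment_pt t d)"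
  have "moment_pt t a \<noteq> moment_pt t d"
    using assms t_eq_iff[of a d] by (auto simp: moment_pt_def)
  then have M: "?M \<in> open_segment (moment_pt t a) (moment_pt t d)"
    by simp
  then have "?M \<in> conv_of t {0..n+1}"
    using assms closed_segment_subset_conv_of[of a "{0..n+1}" d t] open_closed_segment by auto
  then obtain S where "S \<in> T" "?M \<in> conv_of t S"
    using Union_conv_of_triangulation by blast
  with M assms simplex_subset show thesis
    using chord_in_conv_of[of S a d ?M] that by blast
qed

lemma Gamma_graph_path_edge:
  assumes "1 \<le> i" "i < n"
  shows "{i, i + 1} \<in> Gamma_graph n T"
proof -
  have "\<exists>S\<in>T. {i, i + 1} \<subseteq> S"
    by (rule edge_or_crossing[of i "i + 1"]) (use assms in auto)
  then show ?thesis
    using assms by (simp add: insert_in_Gamma_graph_iff)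
qed

lemma Gamma_graph_X_property:
  assumes "a < b" "b < c" "c < d" "{a, c} \<in> Gamma_graph n T" "{b, d} \<in> Gamma_graph n T"
  shows "{a, d} \<in> Gamma_graph n T"
proof -
  obtain S1 where S1: "S1 \<in> T" "{a, c} \<subseteq> S1" and "a \<in> {1..n}"
    using assms(4) by (auto simp: insert_in_Gamma_graph_iff)
  obtain S2 where S2: "S2 \<in> T" "{b, d} \<subseteq> S2" and "d \<in> {1..n}"
    using assms(5) by (auto simp: insert_in_Gamma_graph_iff)
  have "\<exists>S\<in>T. {a, d} \<subseteq> S"
  proof (rule edge_or_crossing[of a d])
    fix S i j k
    assume S: "S \<in> T" "{i, j, k} \<subseteq> S" "i < a" "a < j" "j < d" "d < k"
    have False
    proof (cases "j < c")
      case True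
      show False
        by (rule no_crossing[OF S1(1) S(1) S1(2) S(2)]) (use S True assms in auto)
    next
      case False
      show False
        by (rule no_crossing[OF S2(1) S(1) S2(2) S(2)]) (use S False assms in auto)
    qed
    then show ?thesis ..
  qed (use assms \<open>d \<in> {1..n}\<close> in auto)
  with \<open>a \<in> {1..n}\<close> \<open>d \<in> {1..n}\<close> assms(1-3) show ?thesis
    by (simp add: insert_in_Gamma_graph_iff)
qed

lemma simplex_containing_segment_start:
  assumes "M \<in> conv_of t {0..n+1}" "P \<in> conv_of t {0..n+1}"
  obtains S \<delta> where "S \<in> T" "M \<in> conv_of t S" "M + \<delta> *\<^sub>R (P - M) \<in> conv_of t S" "0 < \<delta>"
proof -
  have "closed_segment M P \<subseteq> \<Union> (conv_of t ` T)"
    using assms unfolding Union_conv_of_triangulation conv_of_def by (intro closed_segment_subset) auto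
  then show thesis
    using finite_closed_cover_segment_start[of "conv_of t ` T" M P] that
    by (auto simp: finite_triangulation closed_conv_of finite_simplex)
qed

(* The functional z2 - (t a + t b) z1 + t a t b is (x - t a)(x - t b) on the curve: it vanishes at the
   midpoint of the edge and is negative at \<gamma>(t (a+1)), hence negative at the displaced point. *)
lemma simplex_containing_edge_and_inner_vertex:
  assumes "a + 1 < b" "b \<le> n + 1" "S0 \<in> T" "{a, b} \<subseteq> S0"
  obtains S j where "S \<in> T" "{a, j, b} \<subseteq> S" "a < j" "j < b"
proof -
  define M where "M = midpoint (moment_pt t a) (moment_pt t b)"
  define P where "P = moment_pt t (a + 1)"
  have "M \<in> conv_of t {0..n+1}"
    unfolding M_def using assms(1,2) closed_segment_subset_conv_of[of a "{0..n+1}" b t] by auto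
  moreover have "P \<in> conv_of t {0..n+1}"
    unfolding P_def conv_of_def using assms(1,2) by (intro hull_inc) auto
  ultimately obtain S \<delta> where S: "S \<in> T" "M \<in> conv_of t S" "M + \<delta> *\<^sub>R (P - M) \<in> conv_of t S"
    and "0 < \<delta>"
    by (rule simplex_containing_segment_start)
  have ab: "a \<le> n + 1" "a < b" "t a < t b"
    using assms(1,2) by (auto simp: t_less_iff)
  have "moment_pt t a \<noteq> moment_pt t b"
    using ab by (auto simp: moment_pt_def)
  then have "{a, b} \<subseteq> S"
    using edge_subset_simplex_meeting_it[OF assms(3,4) ab(2) S(1) _ S(2)] unfolding M_def by simp
  moreover obtain j where "j \<in> S" "t a < t j" "t j < t b"
  proof -
    have "t a < t (a + 1)" "t (a + 1) < t b"
      using assms(1,2) by (auto simp: t_less_iff)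
    then have "\<delta> * ((t (a + 1) - t a) * (t (a + 1) - t b)) < 0"
      using \<open>0 < \<delta>\<close> by (simp add: mult_pos_neg)
    moreover have "fst (snd (M + \<delta> *\<^sub>R (P - M))) - (t a + t b) * fst (M + \<delta> *\<^sub>R (P - M)) + t a * t b
        = \<delta> * ((t (a + 1) - t a) * (t (a + 1) - t b))"
      unfolding M_def P_def by (simp add: midpoint_def moment_pt_def field_simps power2_eq_square)
    ultimately have "fst (snd (M + \<delta> *\<^sub>R (P - M))) - (t a + t b) * fst (M + \<delta> *\<^sub>R (P - M)) + t a * t b < 0"
      by simp
    moreover have "M + \<delta> *\<^sub>R (P - M) \<in> convex hull (moment_curve ` t ` S)"
      using S(3) by (simp add: conv_of_eq_convex_hull_moment_curve)
    ultimately obtain x where "x \<in> t ` S" "(x - t a) * (x - t b) < 0"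
      using moment_curve_convex_hull_between finite_simplex[OF S(1)] by blast
    with ab show thesis
      using that by (auto simp: mult_less_0_iff)
  qed
  moreover have "a < j" "j < b"
    using calculation simplex_vertex_le[OF S(1)] ab by (auto simp: t_less_iff)
  ultimately show thesis
    using that S(1) by blast
qed

lemma Gamma_graph_bar_property:
  assumes "a + 1 < b" "{a, b} \<in> Gamma_graph n T"
  shows "\<exists>x. a < x \<and> x < b \<and> {a, x} \<in> Gamma_graph n T \<and> {x, b} \<in> Gamma_graph n T"
proof -
  obtain S0 where "S0 \<in> T" "{a, b} \<subseteq> S0" and ab: "a \<in> {1..n}" "b \<in> {1..n}"
    using assms(2) by (auto simp: insert_in_Gamma_graph_iff)
  then obtain S j where "S \<in> T" "{a, j, b} \<subseteq> S" "a < j" "j < b"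
    using simplex_containing_edge_and_inner_vertex[OF assms(1)] by auto
  with ab show ?thesis
    by (intro exI[of _ j]) (auto simp: insert_in_Gamma_graph_iff)
qed

end

theorem lemma7:
  fixes n :: nat and t :: "nat \<Rightarrow> real" and T :: "nat set set"
  assumes "n \<ge> 2"
    and "strict_mono_on {0..n+1} t"
    and "cyclic_triangulation n t T"
  shows "persistent n (Gamma_graph n T)"
proof -
  interpret cyclic_polytope_triangulation n t T
    using assms(2,3) by unfold_locales
  show ?thesis
    unfolding persistent_def
  proof (intro conjI allI impI)
    show "\<forall>e\<in>Gamma_graph n T. e \<subseteq> {1..n} \<and> card e = 2"
      by (simp add: Gamma_graph_def)
  next
    fix i
    assume "1 \<le> i \<and> i < n"
    then show "{i, i + 1} \<in> Gamma_graph n T"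
      using Gamma_graph_path_edge by blast
  next
    fix a b c d
    assume "a < b \<and> b < c \<and> c < d \<and> {a, c} \<in> Gamma_graph n T \<and> {b, d} \<in> Gamma_graph n T"
    then show "{a, d} \<in> Gamma_graph n T"
      using Gamma_graph_X_property by blast
  next
    fix a b
    assume "a + 1 < b \<and> {a, b} \<in> Gamma_graph n T"
    then show "\<exists>x. a < x \<and> x < b \<and> {a, x} \<in> Gamma_graph n T \<and> {x, b} \<in> Gamma_graph n T"
      using Gamma_graph_bar_property by blast
  qed
qed

end
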